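(* Let $\gamma$ be a locally monotone Jordan curve with a continuous periodic parametrisation $\gamma:\mathbb{R}\to\mathbb{C}$ and local monotonicity constant $\mu$. Let $\varphi:\mathbb{R}\to\mathbb{R}_{\ge0}$ be smooth, supported in $[-1,1]$, with $\int_{\mathbb{R}}\varphi=1$, and for $\varepsilon>0$ set \[ \gamma_\varepsilon(s)=\int_{\mathbb{R}}\frac1\varepsilon\varphi\!\left(\frac u\varepsilon\right)\gamma(s-u)\,du . \] Let $\mu_\varepsilon$ be the local monotonicity constant of $\gamma_\varepsilon$ (which for sufficiently small $\varepsilon$ is a smooth locally monotone Jordan curve). Then $\liminf_{\varepsilon\to0}\mu_\varepsilon\ge\mu$.
   Context: Locally monotone: a Jordan curve with periodic parametrisation $\gamma$ is locally monotone if for every $\theta\in\mathbb{R}$ there are an open interval $U_\theta=(\theta_1,\theta_2)\ni\theta$ and a unit vector $v_\theta\in\mathbb{R}^2$ such that $g_{v_\theta}(s)=\gamma(s)\cdot v_\theta$ is strictly monotone on $U_\theta$. For such a pair put $\mu(\theta,v_\theta,U_\theta)=\min\{|g_{v_\theta}(\theta)-g_{v_\theta}(\theta_1)|,|g_{v_\theta}(\theta)-g_{v_\theta}(\theta_2)|\}$, let $\mu(\theta)$ be the maximal (supremal) value of $\mu(\theta,v_\theta,U_\theta)$ over all admissible pairs, and define the local monotonicity constant of $\gamma$ as $\mu=\min_{\theta\in\mathbb{R}}\mu(\theta)$ (infimum). *)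

theory Defs
  imports "HOL-Analysis.Analysis"
begin

definition periodic_jordan_param :: "(real \<Rightarrow> complex) \<Rightarrow> bool" where
  "periodic_jordan_param \<gamma> \<longleftrightarrow> continuous_on UNIV \<gamma> \<and>
     (\<exists>T>0. (\<forall>s. \<gamma> (s + T) = \<gamma> s) \<and> inj_on \<gamma> {0..<T})"

definition gproj :: "(real \<Rightarrow> complex) \<Rightarrow> complex \<Rightarrow> real \<Rightarrow> real" where
  "gproj \<gamma> v s = \<gamma> s \<bullet> v"

definition strictly_monotone_on :: "real set \<Rightarrow> (real \<Rightarrow> real) \<Rightarrow> bool" where
  "strictly_monotone_on U g \<longleftrightarrow>
     (\<forall>x\<in>U. \<forall>y\<in>U. x < y \<longrightarrow> g x < g y) \<or> (\<forall>x\<in>U. \<forall>y\<in>U. x < y \<longrightarrow> g x > g y)"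

definition admissible :: "(real \<Rightarrow> complex) \<Rightarrow> real \<Rightarrow> complex \<Rightarrow> real \<Rightarrow> real \<Rightarrow> bool" where
  "admissible \<gamma> \<theta> v t1 t2 \<longleftrightarrow> t1 < \<theta> \<and> \<theta> < t2 \<and> norm v = 1 \<and>
     strictly_monotone_on {t1<..<t2} (gproj \<gamma> v)"

definition locally_monotone :: "(real \<Rightarrow> complex) \<Rightarrow> bool" where
  "locally_monotone \<gamma> \<longleftrightarrow> (\<forall>\<theta>. \<exists>v t1 t2. admissible \<gamma> \<theta> v t1 t2)"

definition mu_pair :: "(real \<Rightarrow> complex) \<Rightarrow> real \<Rightarrow> complex \<Rightarrow> real \<Rightarrow> real \<Rightarrow> real" where
  "mu_pair \<gamma> \<theta> v t1 t2 =
     min \<bar>gproj \<gamma> v \<theta> - gproj \<gamma> v t1\<bar> \<bar>gproj \<gamma> v \<theta> - gproj \<gamma> v t2\<bar>"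

text \<open>mu(theta): supremum over admissible pairs (extended reals; -\<infinity> if there is none).\<close>
definition mu_at :: "(real \<Rightarrow> complex) \<Rightarrow> real \<Rightarrow> ereal" where
  "mu_at \<gamma> \<theta> = (SUP p \<in> {(v, t1, t2). admissible \<gamma> \<theta> v t1 t2}.
                    ereal (case p of (v, t1, t2) \<Rightarrow> mu_pair \<gamma> \<theta> v t1 t2))"

definition lm_const :: "(real \<Rightarrow> complex) \<Rightarrow> ereal" where
  "lm_const \<gamma> = (INF \<theta>. mu_at \<gamma> \<theta>)"

definition smooth_fun :: "(real \<Rightarrow> real) \<Rightarrow> bool" where
  "smooth_fun f \<longleftrightarrow> (\<forall>n x. ((deriv ^^ n) f) differentiable (at x))"

definition mollify :: "(real \<Rightarrow> real) \<Rightarrow> real \<Rightarrow> (real \<Rightarrow> complex) \<Rightarrow> real \<Rightarrow> complex" where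
  "mollify \<phi> \<epsilon> \<gamma> s = integral UNIV (\<lambda>u. ((1 / \<epsilon>) * \<phi> (u / \<epsilon>)) *\<^sub>R \<gamma> (s - u))"

end

theory Submission
  imports Defs "HOL-Library.Periodic_Fun"
begin

text \<open>Fix \<open>y < \<mu>\<close>. Every \<open>\<theta>\<close> has an admissible pair \<open>(v, (a, b))\<close> whose
  \<open>\<mu>\<close>-value exceeds \<open>y\<close>; by continuity of \<open>\<gamma>\<close>, the same \<open>v\<close> and a slightly shrunk
  interval serve all nearby \<open>\<theta>'\<close>, with some room to spare on both sides, and compactness of
  one period makes this room a uniform \<open>\<eta> > 0\<close>. Averaging against a nonnegative kernel
  supported in \<open>[-\<epsilon>, \<epsilon>]\<close> keeps \<open>s \<mapsto> \<gamma>\<^sub>\<epsilon>(s) \<bullet> v\<close> strictly monotone on a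
  monotonicity interval shrunk by \<open>\<epsilon>\<close>, so for \<open>\<epsilon> \<le> \<eta>\<close> the same pair is admissible
  for \<open>\<gamma>\<^sub>\<epsilon>\<close>, and since \<open>\<gamma>\<^sub>\<epsilon> \<rightarrow> \<gamma>\<close> uniformly, its \<open>\<mu>\<close>-value drops by at most
  \<open>2 \<parallel>\<gamma>\<^sub>\<epsilon> - \<gamma>\<parallel>\<^sub>\<infinity>\<close>.\<close>

lemma periodic_reduce:
  fixes T x :: real
  assumes "T > 0"
  obtains k :: int where "x - of_int k * T \<in> {0..T}"
proof
  show "x - of_int \<lfloor>x / T\<rfloor> * T \<in> {0..T}"
    using floor_divide_lower[OF assms, of x] floor_divide_upper[OF assms, of x]
    by (simp add: algebra_simps)
qed

lemma periodic_uniformly_continuous: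
  fixes f :: "real \<Rightarrow> 'a::metric_space"
  assumes cont: "continuous_on UNIV f" and "T > 0" and periodic: "\<And>x. f (x + T) = f x"
  shows "uniformly_continuous_on UNIV f"
  unfolding uniformly_continuous_on_def
proof (intro allI impI)
  interpret f: periodic_fun_simple f T
    by standard (rule periodic)
  fix e :: real
  assume "e > 0"
  have "uniformly_continuous_on {-T..2*T} f"
    by (rule compact_uniformly_continuous) (auto intro: continuous_on_subset[OF cont])
  then obtain d where "d > 0"
    and d: "\<And>x x'. x \<in> {-T..2*T} \<Longrightarrow> x' \<in> {-T..2*T} \<Longrightarrow> dist x' x < d \<Longrightarrow> dist (f x') (f x) < e"
    using \<open>e > 0\<close> unfolding uniformly_continuous_on_def by metis
  have "dist (f x') (f x) < e" if "dist x' x < min d T" for x x'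
  proof -
    obtain k :: int where k: "x - of_int k * T \<in> {0..T}"
      using periodic_reduce[OF \<open>T > 0\<close>] .
    have "x' - of_int k * T \<in> {-T..2*T}"
      using k that by (auto simp: dist_real_def)
    then have "dist (f (x' - of_int k * T)) (f (x - of_int k * T)) < e"
      using k that by (intro d) (auto simp: dist_real_def)
    then show ?thesis
      using f.plus_of_int[of "x - of_int k * T" k] f.plus_of_int[of "x' - of_int k * T" k] by simp
  qed
  then show "\<exists>d>0. \<forall>x\<in>UNIV. \<forall>x'\<in>UNIV. dist x' x < d \<longrightarrow> dist (f x') (f x) < e"
    using \<open>d > 0\<close> \<open>T > 0\<close> by (intro exI[of _ "min d T"]) auto
qed

lemma compact_uniform_radius:
  fixes S :: "'a::metric_space set"
  assumes "compact S"
    and locally: "\<And>x. x \<in> S \<Longrightarrow> \<exists>r>0. \<forall>y\<in>ball x r. P y r"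
    and antimono: "\<And>x r r'. P x r \<Longrightarrow> r' \<le> r \<Longrightarrow> P x r'"
  shows "\<exists>\<eta>>0. \<forall>x\<in>S. P x \<eta>"
proof (cases "S = {}")
  case True
  then show ?thesis
    using zero_less_one by blast
next
  case False
  obtain R where R_pos: "\<And>x. x \<in> S \<Longrightarrow> R x > 0"
    and R: "\<And>x y. x \<in> S \<Longrightarrow> y \<in> ball x (R x) \<Longrightarrow> P y (R x)"
    using locally by metis
  have "S \<subseteq> (\<Union>x\<in>S. ball x (R x))"
    using R_pos by force
  then obtain C where C: "C \<subseteq> S" "finite C" "S \<subseteq> (\<Union>x\<in>C. ball x (R x))"
    using compactE_image[OF \<open>compact S\<close>, of S "\<lambda>x. ball x (R x)"] by auto
  with False have "C \<noteq> {}"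
    by auto
  have "P y (Min (R ` C))" if "y \<in> S" for y
  proof -
    obtain x where "x \<in> C" "y \<in> ball x (R x)"
      using C(3) \<open>y \<in> S\<close> by blast
    then show ?thesis
      using C R by (meson antimono Min_le finite_imageI imageI subsetD)
  qed
  moreover have "Min (R ` C) > 0"
    using C \<open>C \<noteq> {}\<close> R_pos by (auto simp: Min_gr_iff)
  ultimately show ?thesis
    by blast
qed

lemma strictly_monotone_on_subset:
  "strictly_monotone_on U g \<Longrightarrow> V \<subseteq> U \<Longrightarrow> strictly_monotone_on V g"
  unfolding strictly_monotone_on_def by blast

lemma strictly_monotone_on_translate:
  fixes g :: "real \<Rightarrow> real"
  assumes "\<And>s. g (s + c) = g s" and "strictly_monotone_on {p<..<q} g"
  shows "strictly_monotone_on {p + c<..<q + c} g"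
proof -
  have "g x = g (x - c)" for x
    using assms(1)[of "x - c"] by simp
  moreover have "x \<in> {p + c<..<q + c} \<longleftrightarrow> x - c \<in> {p<..<q}" for x
    by auto
  ultimately show ?thesis
    using assms(2) unfolding strictly_monotone_on_def
    by (smt (verit, ccfv_threshold))
qed

lemma integral_convolution_strict_mono:
  fixes k g :: "real \<Rightarrow> real"
  assumes "\<epsilon> > 0"
    and k_cont: "continuous_on {-\<epsilon>..\<epsilon>} k" and k_nonneg: "\<And>u. u \<in> {-\<epsilon>..\<epsilon>} \<Longrightarrow> k u \<ge> 0"
    and u0: "u0 \<in> {-\<epsilon>..\<epsilon>}" "k u0 > 0"
    and g_cont: "continuous_on UNIV g" and g_mono: "strict_mono_on {a<..<b} g"
    and xy: "x \<in> {a+\<epsilon><..<b-\<epsilon>}" "y \<in> {a+\<epsilon><..<b-\<epsilon>}" "x < y"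
  shows "integral {-\<epsilon>..\<epsilon>} (\<lambda>u. k u * g (x - u)) < integral {-\<epsilon>..\<epsilon>} (\<lambda>u. k u * g (y - u))"
    (is "?I x < ?I y")
proof -
  define h where "h u = k u * (g (y - u) - g (x - u))" for u
  have g_less: "g (x - u) < g (y - u)" if "u \<in> {-\<epsilon>..\<epsilon>}" for u
    using g_mono that xy by (auto simp: monotone_on_def)
  have h_nonneg: "h u \<ge> 0" if "u \<in> {-\<epsilon>..\<epsilon>}" for u
    using k_nonneg[OF that] g_less[OF that] unfolding h_def by simp
  have "h u0 > 0"
    using u0 g_less[OF u0(1)] unfolding h_def by simp
  have cont_shift: "continuous_on {-\<epsilon>..\<epsilon>} (\<lambda>u. g (s - u))" for s
    by (intro continuous_on_compose2[OF g_cont] continuous_intros) auto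
  have h_cont: "continuous_on {-\<epsilon>..\<epsilon>} h"
    unfolding h_def by (intro continuous_intros k_cont cont_shift)
  have integrable: "(\<lambda>u. k u * g (s - u)) integrable_on {-\<epsilon>..\<epsilon>}" for s
    by (intro integrable_continuous_real continuous_intros k_cont cont_shift)
  have h_integral: "(h has_integral ?I y - ?I x) {-\<epsilon>..\<epsilon>}"
    unfolding h_def right_diff_distrib
    by (intro has_integral_diff integrable_integral integrable)
  have "0 \<le> ?I y - ?I x"
    using has_integral_nonneg[OF h_integral] h_nonneg by blast
  moreover have "?I y - ?I x \<noteq> 0"
  proof
    assume "?I y - ?I x = 0"
    then have "h u0 = 0"
      by (intro has_integral_0_cbox_imp_0[of "-\<epsilon>" \<epsilon> h])
        (use h_cont h_nonneg h_integral u0 \<open>\<epsilon> > 0\<close> in auto)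
    with \<open>h u0 > 0\<close> show False
      by simp
  qed
  ultimately show ?thesis
    by simp
qed

lemma strictly_monotone_on_convolution:
  fixes k g :: "real \<Rightarrow> real"
  assumes "\<epsilon> > 0"
    and k_cont: "continuous_on {-\<epsilon>..\<epsilon>} k" and k_nonneg: "\<And>u. u \<in> {-\<epsilon>..\<epsilon>} \<Longrightarrow> k u \<ge> 0"
    and u0: "u0 \<in> {-\<epsilon>..\<epsilon>}" "k u0 > 0"
    and g_cont: "continuous_on UNIV g" and g_mono: "strictly_monotone_on {a<..<b} g"
  shows "strictly_monotone_on {a+\<epsilon><..<b-\<epsilon>} (\<lambda>s. integral {-\<epsilon>..\<epsilon>} (\<lambda>u. k u * g (s - u)))"
proof -
  from g_mono consider "strict_mono_on {a<..<b} g" | "strict_mono_on {a<..<b} (\<lambda>s. - g s)"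
    unfolding strictly_monotone_on_def monotone_on_def by force
  then show ?thesis
  proof cases
    case 1
    have "integral {-\<epsilon>..\<epsilon>} (\<lambda>u. k u * g (x - u)) < integral {-\<epsilon>..\<epsilon>} (\<lambda>u. k u * g (y - u))"
      if "x \<in> {a+\<epsilon><..<b-\<epsilon>}" "y \<in> {a+\<epsilon><..<b-\<epsilon>}" "x < y" for x y
      by (rule integral_convolution_strict_mono) (use assms 1 that in auto)
    then show ?thesis
      unfolding strictly_monotone_on_def by blast
  next
    case 2
    have "continuous_on UNIV (\<lambda>s. - g s)"
      by (intro continuous_intros g_cont)
    have "integral {-\<epsilon>..\<epsilon>} (\<lambda>u. k u * - g (x - u)) < integral {-\<epsilon>..\<epsilon>} (\<lambda>u. k u * - g (y - u))"
      if "x \<in> {a+\<epsilon><..<b-\<epsilon>}" "y \<in> {a+\<epsilon><..<b-\<epsilon>}" "x < y" for x y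
      by (rule integral_convolution_strict_mono) (use assms 2 that \<open>continuous_on UNIV (\<lambda>s. - g s)\<close> in auto)
    then show ?thesis
      unfolding strictly_monotone_on_def by simp
  qed
qed

lemma has_integral_weighted_mean_dist_le:
  fixes f :: "'a::euclidean_space \<Rightarrow> 'b::banach"
  assumes k: "(k has_integral 1) S" and k_nonneg: "\<And>u. u \<in> S \<Longrightarrow> k u \<ge> 0"
    and kf: "((\<lambda>u. k u *\<^sub>R f u) has_integral I) S"
    and close: "\<And>u. u \<in> S \<Longrightarrow> norm (f u - c) \<le> \<delta>"
  shows "norm (I - c) \<le> \<delta>"
proof -
  have diff: "((\<lambda>u. k u *\<^sub>R (f u - c)) has_integral I - c) S"
    using has_integral_diff[OF kf has_integral_scaleR_left[OF k, of c]]
    by (simp add: scaleR_diff_right)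
  have bound: "((\<lambda>u. k u * \<delta>) has_integral \<delta>) S"
    using has_integral_mult_left[OF k, of \<delta>] by simp
  have "norm (integral S (\<lambda>u. k u *\<^sub>R (f u - c))) \<le> integral S (\<lambda>u. k u * \<delta>)"
    by (rule integral_norm_bound_integral)
      (use diff bound close k_nonneg in \<open>auto intro: mult_left_mono\<close>)
  then show ?thesis
    unfolding integral_unique[OF diff] integral_unique[OF bound] .
qed

locale mollifier =
  fixes \<phi> :: "real \<Rightarrow> real"
  assumes continuous: "continuous_on UNIV \<phi>"
    and nonneg: "\<phi> x \<ge> 0"
    and vanishes: "\<bar>x\<bar> > 1 \<Longrightarrow> \<phi> x = 0"
    and integral_one: "(\<phi> has_integral 1) UNIV"
begin

definition kernel :: "real \<Rightarrow> real \<Rightarrow> real" where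
  "kernel \<epsilon> u = (1 / \<epsilon>) * \<phi> (u / \<epsilon>)"

lemma continuous_on_kernel: "continuous_on S (kernel \<epsilon>)"
proof -
  have "continuous_on S (\<lambda>u. u / \<epsilon>)"
    unfolding divide_inverse by (intro continuous_intros)
  then have "continuous_on S (\<lambda>u. \<phi> (u / \<epsilon>))"
    by (rule continuous_on_compose2[OF continuous]) auto
  then show ?thesis
    unfolding kernel_def by (intro continuous_intros)
qed

lemma kernel_nonneg: "\<epsilon> \<ge> 0 \<Longrightarrow> kernel \<epsilon> u \<ge> 0"
  unfolding kernel_def using nonneg by simp

lemma kernel_vanishes:
  assumes "\<epsilon> > 0" "\<bar>u\<bar> > \<epsilon>"
  shows "kernel \<epsilon> u = 0"
proof -
  have "\<bar>u / \<epsilon>\<bar> > 1"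
    using assms by (simp add: abs_divide)
  then show ?thesis
    unfolding kernel_def by (simp add: vanishes)
qed

lemma has_integral_kernel:
  assumes "\<epsilon> > 0"
  shows "(kernel \<epsilon> has_integral 1) {-\<epsilon>..\<epsilon>}"
proof -
  have "\<phi> = (\<lambda>x. if x \<in> {-1..1} then \<phi> x else 0)"
    using vanishes by (auto simp: fun_eq_iff abs_if)
  then have "(\<phi> has_integral 1) {-1..1}"
    using integral_one has_integral_restrict_UNIV[of "{-1..1}" \<phi>] by metis
  from has_integral_stretch_real[OF this, of "1 / \<epsilon>"]
  have "((\<lambda>u. \<phi> (u / \<epsilon>)) has_integral \<epsilon>) ((\<lambda>x. x / (1 / \<epsilon>)) ` {-1..1})"
    using assms by simp
  moreover have "(\<lambda>x. x / (1 / \<epsilon>)) ` {-1..1} = {-\<epsilon>..\<epsilon>}"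
  proof -
    have "(\<lambda>x. x / (1 / \<epsilon>)) ` {-1..1} = (*) \<epsilon> ` {-1..1}"
      by (rule image_cong) auto
    also have "\<dots> = {-\<epsilon>..\<epsilon>}"
      using assms by simp
    finally show ?thesis .
  qed
  ultimately have "((\<lambda>u. \<phi> (u / \<epsilon>)) has_integral \<epsilon>) {-\<epsilon>..\<epsilon>}"
    by simp
  from has_integral_mult_right[OF this, of "1 / \<epsilon>"] show ?thesis
    using assms unfolding kernel_def by simp
qed

lemma kernel_pos:
  assumes "\<epsilon> > 0"
  obtains u where "u \<in> {-\<epsilon>..\<epsilon>}" "kernel \<epsilon> u > 0"
proof -
  have "\<phi> \<noteq> (\<lambda>x. 0)"
    using integral_one by (metis has_integral_0 has_integral_unique zero_neq_one)
  then obtain x where "\<phi> x \<noteq> 0"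
    by auto
  then have "\<phi> x > 0" "\<bar>x\<bar> \<le> 1"
    using nonneg[of x] vanishes[of x] by force+
  moreover have "\<bar>\<epsilon> * x\<bar> \<le> \<epsilon>"
    using \<open>\<bar>x\<bar> \<le> 1\<close> assms by (simp add: abs_mult mult_left_le)
  ultimately have "\<epsilon> * x \<in> {-\<epsilon>..\<epsilon>}" "kernel \<epsilon> (\<epsilon> * x) > 0"
    using assms by (auto simp: kernel_def abs_le_iff)
  then show ?thesis
    by (rule that)
qed

lemma has_integral_mollify:
  assumes "\<epsilon> > 0" and cont: "continuous_on UNIV \<gamma>"
  shows "((\<lambda>u. kernel \<epsilon> u *\<^sub>R \<gamma> (s - u)) has_integral mollify \<phi> \<epsilon> \<gamma> s) {-\<epsilon>..\<epsilon>}"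
proof -
  have "continuous_on {-\<epsilon>..\<epsilon>} (\<lambda>u. \<gamma> (s - u))"
    by (rule continuous_on_compose2[OF cont]) (auto intro: continuous_intros)
  then have integrable: "(\<lambda>u. kernel \<epsilon> u *\<^sub>R \<gamma> (s - u)) integrable_on {-\<epsilon>..\<epsilon>}"
    by (intro integrable_continuous_real continuous_intros continuous_on_kernel)
  have "kernel \<epsilon> u = 0" if "u \<notin> {-\<epsilon>..\<epsilon>}" for u
    using that by (intro kernel_vanishes[OF \<open>\<epsilon> > 0\<close>]) auto
  then have restrict: "(\<lambda>u. kernel \<epsilon> u *\<^sub>R \<gamma> (s - u)) =
      (\<lambda>u. if u \<in> {-\<epsilon>..\<epsilon>} then kernel \<epsilon> u *\<^sub>R \<gamma> (s - u) else 0)"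
    by auto
  have "mollify \<phi> \<epsilon> \<gamma> s = integral {-\<epsilon>..\<epsilon>} (\<lambda>u. kernel \<epsilon> u *\<^sub>R \<gamma> (s - u))"
    unfolding mollify_def kernel_def[symmetric] by (subst restrict) (rule integral_restrict_UNIV)
  with integrable show ?thesis
    by (simp add: integrable_integral)
qed

lemma norm_mollify_diff_le:
  assumes "\<epsilon> > 0" "continuous_on UNIV \<gamma>"
    and "\<And>u. \<bar>u\<bar> \<le> \<epsilon> \<Longrightarrow> norm (\<gamma> (s - u) - \<gamma> s) \<le> \<delta>"
  shows "norm (mollify \<phi> \<epsilon> \<gamma> s - \<gamma> s) \<le> \<delta>"
  by (rule has_integral_weighted_mean_dist_le[OF has_integral_kernel kernel_nonneg has_integral_mollify])
    (use assms in auto)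

lemma eventually_mollify_uniformly_close:
  assumes uc: "uniformly_continuous_on UNIV \<gamma>" and "\<delta> > 0"
  shows "\<forall>\<^sub>F \<epsilon> in at_right 0. \<forall>s. norm (mollify \<phi> \<epsilon> \<gamma> s - \<gamma> s) \<le> \<delta>"
proof -
  obtain d where "d > 0" and d: "\<And>x x'. dist x' x < d \<Longrightarrow> dist (\<gamma> x') (\<gamma> x) < \<delta>"
    using uc \<open>\<delta> > 0\<close> unfolding uniformly_continuous_on_def by blast
  have "\<forall>s. norm (mollify \<phi> \<epsilon> \<gamma> s - \<gamma> s) \<le> \<delta>" if "\<epsilon> \<in> {0<..<d}" for \<epsilon>
  proof
    fix s
    have "norm (\<gamma> (s - u) - \<gamma> s) \<le> \<delta>" if "\<bar>u\<bar> \<le> \<epsilon>" for u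
      using d[of s "s - u"] that \<open>\<epsilon> \<in> {0<..<d}\<close> by (simp add: dist_norm norm_minus_commute)
    then show "norm (mollify \<phi> \<epsilon> \<gamma> s - \<gamma> s) \<le> \<delta>"
      using that uniformly_continuous_imp_continuous[OF uc] by (intro norm_mollify_diff_le) auto
  qed
  then show ?thesis
    using eventually_at_right_real[OF \<open>d > 0\<close>] by (rule eventually_mono[rotated])
qed

lemma gproj_mollify:
  assumes "\<epsilon> > 0" "continuous_on UNIV \<gamma>"
  shows "gproj (mollify \<phi> \<epsilon> \<gamma>) v s = integral {-\<epsilon>..\<epsilon>} (\<lambda>u. kernel \<epsilon> u * gproj \<gamma> v (s - u))"
proof -
  have "((\<lambda>u. kernel \<epsilon> u * gproj \<gamma> v (s - u)) has_integral gproj (mollify \<phi> \<epsilon> \<gamma>) v s) {-\<epsilon>..\<epsilon>}"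
    using has_integral_linear[OF has_integral_mollify[OF assms] bounded_linear_inner_left[of v]]
    by (simp add: gproj_def o_def)
  then show ?thesis
    by (rule integral_unique[symmetric])
qed

lemma strictly_monotone_on_mollify:
  assumes "\<epsilon> > 0" and cont: "continuous_on UNIV \<gamma>"
    and mono: "strictly_monotone_on {a<..<b} (gproj \<gamma> v)"
  shows "strictly_monotone_on {a+\<epsilon><..<b-\<epsilon>} (gproj (mollify \<phi> \<epsilon> \<gamma>) v)"
proof -
  obtain u0 where u0: "u0 \<in> {-\<epsilon>..\<epsilon>}" "kernel \<epsilon> u0 > 0"
    using kernel_pos[OF \<open>\<epsilon> > 0\<close>] .
  have "continuous_on UNIV (gproj \<gamma> v)"
    unfolding gproj_def by (intro continuous_intros cont)
  then have "strictly_monotone_on {a+\<epsilon><..<b-\<epsilon>}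
      (\<lambda>s. integral {-\<epsilon>..\<epsilon>} (\<lambda>u. kernel \<epsilon> u * gproj \<gamma> v (s - u)))"
    by (intro strictly_monotone_on_convolution[OF \<open>\<epsilon> > 0\<close> continuous_on_kernel _ u0 _ mono])
      (use \<open>\<epsilon> > 0\<close> kernel_nonneg in auto)
  moreover have "gproj (mollify \<phi> \<epsilon> \<gamma>) v =
      (\<lambda>s. integral {-\<epsilon>..\<epsilon>} (\<lambda>u. kernel \<epsilon> u * gproj \<gamma> v (s - u)))"
    by (intro ext gproj_mollify[OF \<open>\<epsilon> > 0\<close> cont])
  ultimately show ?thesis
    by simp
qed

end

lemma mu_pair_le_mu_at: "admissible \<gamma> \<theta> v a b \<Longrightarrow> ereal (mu_pair \<gamma> \<theta> v a b) \<le> mu_at \<gamma> \<theta>"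
  unfolding mu_at_def by (rule SUP_upper2[of "(v, a, b)"]) auto

lemma mu_pair_perturb:
  assumes "norm v = 1" and close: "\<And>s. norm (\<gamma>' s - \<gamma> s) \<le> \<delta>"
  shows "mu_pair \<gamma> \<theta> v a b - 2 * \<delta> \<le> mu_pair \<gamma>' \<theta> v a b"
proof -
  have "\<bar>gproj \<gamma>' v s - gproj \<gamma> v s\<bar> \<le> \<delta>" for s
  proof -
    have "\<bar>gproj \<gamma>' v s - gproj \<gamma> v s\<bar> \<le> norm (\<gamma>' s - \<gamma> s) * norm v"
      unfolding gproj_def by (metis Cauchy_Schwarz_ineq2 inner_diff_left)
    then show ?thesis
      using close[of s] \<open>norm v = 1\<close> by simp
  qed
  from this[of \<theta>] this[of a] this[of b] show ?thesis
    unfolding mu_pair_def by linarith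
qed

text \<open>Mollifying with \<open>\<epsilon> \<le> r\<close> shrinks the monotonicity interval \<open>(a - r, b + r)\<close> by
  \<open>\<epsilon>\<close> at each end, so \<open>(v, (a, b))\<close> stays admissible for the mollified curve.\<close>
definition mu_margin :: "(real \<Rightarrow> complex) \<Rightarrow> real \<Rightarrow> real \<Rightarrow> real \<Rightarrow> bool" where
  "mu_margin \<gamma> y \<theta> r \<longleftrightarrow> (\<exists>v a b. norm v = 1 \<and> a < \<theta> \<and> \<theta> < b \<and>
     strictly_monotone_on {a - r<..<b + r} (gproj \<gamma> v) \<and> y < mu_pair \<gamma> \<theta> v a b)"

lemma mu_margin_antimono:
  assumes "mu_margin \<gamma> y \<theta> r" and "r' \<le> r"
  shows "mu_margin \<gamma> y \<theta> r'"
proof -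
  have "{a - r'<..<b + r'} \<subseteq> {a - r<..<b + r}" for a b
    using \<open>r' \<le> r\<close> by auto
  then show ?thesis
    using assms(1) unfolding mu_margin_def by (meson strictly_monotone_on_subset)
qed

lemma mu_margin_translate:
  assumes periodic: "\<And>s. \<gamma> (s + c) = \<gamma> s" and "mu_margin \<gamma> y \<theta> r"
  shows "mu_margin \<gamma> y (\<theta> + c) r"
proof -
  obtain v a b where "norm v = 1" "a < \<theta>" "\<theta> < b"
    and mono: "strictly_monotone_on {a - r<..<b + r} (gproj \<gamma> v)" and "y < mu_pair \<gamma> \<theta> v a b"
    using assms(2) unfolding mu_margin_def by blast
  have g_periodic: "gproj \<gamma> v (s + c) = gproj \<gamma> v s" for s
    unfolding gproj_def by (simp add: periodic)
  have "strictly_monotone_on {(a + c) - r<..<(b + c) + r} (gproj \<gamma> v)"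
    using strictly_monotone_on_translate[OF g_periodic mono] by (simp add: algebra_simps)
  moreover have "mu_pair \<gamma> (\<theta> + c) v (a + c) (b + c) = mu_pair \<gamma> \<theta> v a b"
    unfolding mu_pair_def by (simp add: g_periodic)
  ultimately show ?thesis
    unfolding mu_margin_def using \<open>norm v = 1\<close> \<open>a < \<theta>\<close> \<open>\<theta> < b\<close> \<open>y < mu_pair \<gamma> \<theta> v a b\<close>
    by (intro exI[of _ v] exI[of _ "a + c"] exI[of _ "b + c"]) auto
qed

lemma eventually_nhds_dist_gt:
  fixes g :: "'a::t2_space \<Rightarrow> 'b::metric_space"
  assumes "isCont g t" and "y < dist (g t) c"
  shows "\<forall>\<^sub>F x in nhds t. y < dist (g x) c"
proof -
  have "(g \<longlongrightarrow> g t) (nhds t)"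
    using assms(1) continuous_at tendsto_at_iff_tendsto_nhds by blast
  from order_tendstoD(1)[OF tendsto_dist[OF this tendsto_const] assms(2)] show ?thesis .
qed

lemma isCont_gproj: "continuous_on UNIV \<gamma> \<Longrightarrow> isCont (gproj \<gamma> v) x"
  unfolding gproj_def by (intro continuous_intros) (simp add: continuous_on_eq_continuous_at)

lemma mu_pair_shrink:
  assumes cont: "continuous_on UNIV \<gamma>" and "t\<^sub>1 < \<theta>" "\<theta> < t\<^sub>2" and "y < mu_pair \<gamma> \<theta> v t\<^sub>1 t\<^sub>2"
  obtains a b where "t\<^sub>1 < a" "a < \<theta>" "\<theta> < b" "b < t\<^sub>2" "y < mu_pair \<gamma> \<theta> v a b"
proof -
  define g where "g = gproj \<gamma> v"
  have g_cont: "isCont g x" for x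
    unfolding g_def by (rule isCont_gproj[OF cont])
  have far: "y < dist (g t\<^sub>1) (g \<theta>)" "y < dist (g t\<^sub>2) (g \<theta>)"
    using assms(4) unfolding mu_pair_def g_def dist_real_def by auto
  have "\<forall>\<^sub>F a in at_right t\<^sub>1. y < dist (g a) (g \<theta>) \<and> a \<in> {t\<^sub>1<..<\<theta>}"
    using filter_leD[OF at_within_le_nhds eventually_nhds_dist_gt[OF g_cont far(1)]]
      eventually_at_right_real[OF \<open>t\<^sub>1 < \<theta>\<close>] by (rule eventually_conj)
  then obtain a where a: "y < dist (g a) (g \<theta>)" "a \<in> {t\<^sub>1<..<\<theta>}"
    using eventually_happens'[OF trivial_limit_at_right_real] by blast
  have "\<forall>\<^sub>F b in at_left t\<^sub>2. y < dist (g b) (g \<theta>) \<and> b \<in> {\<theta><..<t\<^sub>2}"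
    using filter_leD[OF at_within_le_nhds eventually_nhds_dist_gt[OF g_cont far(2)]]
      eventually_at_left_real[OF \<open>\<theta> < t\<^sub>2\<close>] by (rule eventually_conj)
  then obtain b where b: "y < dist (g b) (g \<theta>)" "b \<in> {\<theta><..<t\<^sub>2}"
    using eventually_happens'[OF trivial_limit_at_left_real] by blast
  have "y < mu_pair \<gamma> \<theta> v a b"
    using a(1) b(1) unfolding mu_pair_def g_def dist_real_def by auto
  with a(2) b(2) show ?thesis
    using that by auto
qed

lemma mu_margin_near:
  assumes cont: "continuous_on UNIV \<gamma>" and "ereal y < mu_at \<gamma> \<theta>\<^sub>0"
  shows "\<exists>r>0. \<forall>\<theta>\<in>ball \<theta>\<^sub>0 r. mu_margin \<gamma> y \<theta> r"
proof -
  obtain v t\<^sub>1 t\<^sub>2 where adm: "admissible \<gamma> \<theta>\<^sub>0 v t\<^sub>1 t\<^sub>2" and "y < mu_pair \<gamma> \<theta>\<^sub>0 v t\<^sub>1 t\<^sub>2"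
    using assms(2) unfolding mu_at_def less_SUP_iff by auto
  have "t\<^sub>1 < \<theta>\<^sub>0" "\<theta>\<^sub>0 < t\<^sub>2" "norm v = 1" and mono: "strictly_monotone_on {t\<^sub>1<..<t\<^sub>2} (gproj \<gamma> v)"
    using adm unfolding admissible_def by auto
  then obtain a b where ab: "t\<^sub>1 < a" "a < \<theta>\<^sub>0" "\<theta>\<^sub>0 < b" "b < t\<^sub>2" and "y < mu_pair \<gamma> \<theta>\<^sub>0 v a b"
    using mu_pair_shrink[OF cont] \<open>y < mu_pair \<gamma> \<theta>\<^sub>0 v t\<^sub>1 t\<^sub>2\<close> by metis
  define g where "g = gproj \<gamma> v"
  have "y < dist (g \<theta>\<^sub>0) (g a)" "y < dist (g \<theta>\<^sub>0) (g b)"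
    using \<open>y < mu_pair \<gamma> \<theta>\<^sub>0 v a b\<close> unfolding mu_pair_def g_def dist_real_def by auto
  then have "\<forall>\<^sub>F \<theta> in nhds \<theta>\<^sub>0. y < dist (g \<theta>) (g a) \<and> y < dist (g \<theta>) (g b) \<and> \<theta> \<in> {a<..<b}"
    using ab unfolding g_def
    by (intro eventually_conj eventually_nhds_dist_gt[OF isCont_gproj[OF cont]] eventually_nhds_in_open) auto
  then obtain d where "d > 0"
    and d: "\<And>\<theta>. dist \<theta> \<theta>\<^sub>0 < d \<Longrightarrow> y < dist (g \<theta>) (g a) \<and> y < dist (g \<theta>) (g b) \<and> \<theta> \<in> {a<..<b}"
    unfolding eventually_nhds_metric by blast
  define r where "r = min d (min (a - t\<^sub>1) (t\<^sub>2 - b))"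
  have "mu_margin \<gamma> y \<theta> r" if "\<theta> \<in> ball \<theta>\<^sub>0 r" for \<theta>
  proof -
    have "dist \<theta> \<theta>\<^sub>0 < d"
      using that by (simp add: r_def dist_commute)
    moreover have "strictly_monotone_on {a - r<..<b + r} (gproj \<gamma> v)"
      by (rule strictly_monotone_on_subset[OF mono]) (auto simp: r_def)
    ultimately show ?thesis
      unfolding mu_margin_def mu_pair_def using d \<open>norm v = 1\<close> by (auto simp: g_def dist_real_def)
  qed
  moreover have "r > 0"
    using \<open>d > 0\<close> ab by (simp add: r_def)
  ultimately show ?thesis
    by blast
qed

lemma mu_margin_uniform:
  assumes cont: "continuous_on UNIV \<gamma>" and "T > 0" and periodic: "\<And>s. \<gamma> (s + T) = \<gamma> s"
    and above: "\<And>\<theta>. ereal y < mu_at \<gamma> \<theta>"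
  obtains \<eta> where "\<eta> > 0" "\<And>\<theta>. mu_margin \<gamma> y \<theta> \<eta>"
proof -
  interpret \<gamma>: periodic_fun_simple \<gamma> T
    by standard (rule periodic)
  have "\<exists>\<eta>>0. \<forall>\<theta>\<in>{0..T}. mu_margin \<gamma> y \<theta> \<eta>"
    using compact_Icc mu_margin_near[OF cont above] mu_margin_antimono
    by (rule compact_uniform_radius)
  then obtain \<eta> where "\<eta> > 0" and \<eta>: "\<And>\<theta>. \<theta> \<in> {0..T} \<Longrightarrow> mu_margin \<gamma> y \<theta> \<eta>"
    by blast
  have "mu_margin \<gamma> y \<theta> \<eta>" for \<theta>
  proof -
    obtain k :: int where "\<theta> - of_int k * T \<in> {0..T}"
      using periodic_reduce[OF \<open>T > 0\<close>] .
    then have "mu_margin \<gamma> y (\<theta> - of_int k * T + of_int k * T) \<eta>"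
      by (intro mu_margin_translate \<eta> \<gamma>.plus_of_int)
    then show ?thesis
      by simp
  qed
  with \<open>\<eta> > 0\<close> show ?thesis
    by (rule that)
qed

lemma (in mollifier) mu_at_mollify_ge:
  assumes cont: "continuous_on UNIV \<gamma>" and "mu_margin \<gamma> y \<theta> r" and "0 < \<epsilon>" "\<epsilon> \<le> r"
    and close: "\<And>s. norm (mollify \<phi> \<epsilon> \<gamma> s - \<gamma> s) \<le> \<delta>"
  shows "ereal (y - 2 * \<delta>) \<le> mu_at (mollify \<phi> \<epsilon> \<gamma>) \<theta>"
proof -
  obtain v a b where "norm v = 1" "a < \<theta>" "\<theta> < b"
    and mono: "strictly_monotone_on {a - r<..<b + r} (gproj \<gamma> v)" and "y < mu_pair \<gamma> \<theta> v a b"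
    using assms(2) unfolding mu_margin_def by blast
  have "strictly_monotone_on {a - r + \<epsilon><..<b + r - \<epsilon>} (gproj (mollify \<phi> \<epsilon> \<gamma>) v)"
    by (rule strictly_monotone_on_mollify[OF \<open>0 < \<epsilon>\<close> cont mono])
  moreover have "{a<..<b} \<subseteq> {a - r + \<epsilon><..<b + r - \<epsilon>}"
    using \<open>\<epsilon> \<le> r\<close> by auto
  ultimately have admissible: "admissible (mollify \<phi> \<epsilon> \<gamma>) \<theta> v a b"
    unfolding admissible_def using \<open>norm v = 1\<close> \<open>a < \<theta>\<close> \<open>\<theta> < b\<close>
    by (auto intro: strictly_monotone_on_subset)
  have "y - 2 * \<delta> \<le> mu_pair (mollify \<phi> \<epsilon> \<gamma>) \<theta> v a b"
    using mu_pair_perturb[of v "mollify \<phi> \<epsilon> \<gamma>" \<gamma> \<delta> \<theta> a b, OF \<open>norm v = 1\<close> close]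
      \<open>y < mu_pair \<gamma> \<theta> v a b\<close>
    by linarith
  then have "ereal (y - 2 * \<delta>) \<le> ereal (mu_pair (mollify \<phi> \<epsilon> \<gamma>) \<theta> v a b)"
    by simp
  also have "\<dots> \<le> mu_at (mollify \<phi> \<epsilon> \<gamma>) \<theta>"
    by (rule mu_pair_le_mu_at[OF admissible])
  finally show ?thesis .
qed

lemma (in mollifier) eventually_lm_const_mollify_gt:
  assumes cont: "continuous_on UNIV \<gamma>" and "T > 0" and periodic: "\<And>s. \<gamma> (s + T) = \<gamma> s"
    and "z < lm_const \<gamma>"
  shows "\<forall>\<^sub>F \<epsilon> in at_right 0. z < lm_const (mollify \<phi> \<epsilon> \<gamma>)"
proof -
  obtain y\<^sub>0 where "z < ereal y\<^sub>0" "ereal y\<^sub>0 < lm_const \<gamma>"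
    using ereal_dense2[OF \<open>z < lm_const \<gamma>\<close>] by blast
  then obtain y where "y\<^sub>0 < y" "ereal y < lm_const \<gamma>"
    using ereal_dense2 by fastforce
  then have "ereal y < mu_at \<gamma> \<theta>" for \<theta>
    unfolding lm_const_def by (meson INF_lower UNIV_I less_le_trans)
  then obtain \<eta> where "\<eta> > 0" and margin: "\<And>\<theta>. mu_margin \<gamma> y \<theta> \<eta>"
    using mu_margin_uniform[OF cont \<open>T > 0\<close> periodic] by blast
  define \<delta> where "\<delta> = (y - y\<^sub>0) / 2"
  have "\<delta> > 0"
    using \<open>y\<^sub>0 < y\<close> by (simp add: \<delta>_def)
  have y\<^sub>0_eq: "y\<^sub>0 = y - 2 * \<delta>"
    by (simp add: \<delta>_def field_simps)
  have uc: "uniformly_continuous_on UNIV \<gamma>"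
    by (rule periodic_uniformly_continuous[OF cont \<open>T > 0\<close> periodic])
  have "\<forall>\<^sub>F \<epsilon> in at_right 0. (\<forall>s. norm (mollify \<phi> \<epsilon> \<gamma> s - \<gamma> s) \<le> \<delta>) \<and> \<epsilon> \<in> {0<..<\<eta>}"
    using eventually_mollify_uniformly_close[OF uc \<open>\<delta> > 0\<close>] eventually_at_right_real[OF \<open>\<eta> > 0\<close>]
    by (rule eventually_conj)
  then show ?thesis
  proof (rule eventually_mono)
    fix \<epsilon>
    assume "(\<forall>s. norm (mollify \<phi> \<epsilon> \<gamma> s - \<gamma> s) \<le> \<delta>) \<and> \<epsilon> \<in> {0<..<\<eta>}"
    then have "ereal y\<^sub>0 \<le> lm_const (mollify \<phi> \<epsilon> \<gamma>)"
      unfolding y\<^sub>0_eq lm_const_def by (intro INF_greatest mu_at_mollify_ge[OF cont margin]) auto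
    with \<open>z < ereal y\<^sub>0\<close> show "z < lm_const (mollify \<phi> \<epsilon> \<gamma>)"
      by (rule less_le_trans)
  qed
qed

theorem lemma4p2:
  fixes \<gamma> :: "real \<Rightarrow> complex" and \<phi> :: "real \<Rightarrow> real"
  assumes "periodic_jordan_param \<gamma>"
    and "locally_monotone \<gamma>"
    and "smooth_fun \<phi>"
    and "\<And>x. \<phi> x \<ge> 0"
    and "\<And>x. \<bar>x\<bar> > 1 \<Longrightarrow> \<phi> x = 0"
    and "(\<phi> has_integral 1) UNIV"
  shows "Liminf (at_right 0) (\<lambda>\<epsilon>. lm_const (mollify \<phi> \<epsilon> \<gamma>)) \<ge> lm_const \<gamma>"
proof -
  obtain T where "T > 0" and periodic: "\<And>s. \<gamma> (s + T) = \<gamma> s" and cont: "continuous_on UNIV \<gamma>"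
    using assms(1) unfolding periodic_jordan_param_def by blast
  have "\<phi> differentiable (at x)" for x
    using assms(3) unfolding smooth_fun_def by (metis funpow_0)
  then have "continuous_on UNIV \<phi>"
    by (simp add: continuous_at_imp_continuous_on differentiable_imp_continuous_within)
  then interpret mollifier \<phi>
    using assms(4-6) by unfold_locales
  show ?thesis
    unfolding le_Liminf_iff using eventually_lm_const_mollify_gt[OF cont \<open>T > 0\<close> periodic] by blast
qed

end
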